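(* Let $\mathcal{S}$ be a sheaf of pseudometric spaces on a topological space $(X,\mathcal{T})$, $a$ an assignment to $\mathcal{S}$, and $U\in\mathcal{T}$. Let $\mathcal{T}\cap U=\{V\in\mathcal{T}:V\subseteq U\}$ and regard $a$ as an assignment supported on $\mathcal{T}\cap U$ by restriction. Then $c_{\mathcal{S}}(a,\mathcal{T}\cap U)\ge c_{\mathcal{S}}(a,U)$.
   Context: A sheaf of pseudometric spaces on $(X,\mathcal{T})$ is a sheaf of sets $\mathcal{S}$ with a pseudometric $d_W$ on each $\mathcal{S}(W)$ making all restriction maps continuous. An assignment is any $b\in\prod_{W\in\mathcal{T}}\mathcal{S}(W)$, with consistency radius $c_{\mathcal{S}}(b)=\sup_{W_1\subseteq W_2\in\mathcal{T}}d_{W_1}(\mathcal{S}(W_1\subseteq W_2)(b(W_2)),b(W_1))$. For a collection $\mathcal{U}\subseteq\mathcal{T}$, an assignment supported on $\mathcal{U}$ is an element $a\in\prod_{W\in\mathcal{U}}\mathcal{S}(W)$, and its consistency radius is $c_{\mathcal{S}}(a,\mathcal{U})=\inf\{c_{\mathcal{S}}(b): b\in\prod_{W\in\mathcal{T}}\mathcal{S}(W),\ b(W)=a(W)\text{ for all }W\in\mathcal{U}\}$. For open $U$, the local consistency radius of a (full) assignment $a$ is $c_{\mathcal{S}}(a,U)=\sup_{W_1\subseteq W_2\subseteq U,\ W_i\in\mathcal{T}}d_{W_1}\big(\mathcal{S}(W_1\subseteq W_2)(a(W_2)),a(W_1)\big)$. *)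

theory Defs
  imports "HOL-Analysis.Analysis"
begin

text \<open>S W is the set of sections over the open set W, res W1 W2 is the restriction
  map S(W2) to S(W1) (for W1 subset of W2), and d W is the pseudometric on S W.\<close>

definition presheaf_sets ::
  "'a topology \<Rightarrow> ('a set \<Rightarrow> 'b set) \<Rightarrow> ('a set \<Rightarrow> 'a set \<Rightarrow> 'b \<Rightarrow> 'b) \<Rightarrow> bool" where
  "presheaf_sets T S res \<longleftrightarrow>
     (\<forall>W1 W2. openin T W1 \<and> openin T W2 \<and> W1 \<subseteq> W2 \<longrightarrow> res W1 W2 ` S W2 \<subseteq> S W1)
   \<and> (\<forall>W. openin T W \<longrightarrow> (\<forall>s\<in>S W. res W W s = s))
   \<and> (\<forall>W1 W2 W3. openin T W1 \<and> openin T W2 \<and> openin T W3 \<and> W1 \<subseteq> W2 \<and> W2 \<subseteq> W3 \<longrightarrow>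
        (\<forall>s\<in>S W3. res W1 W2 (res W2 W3 s) = res W1 W3 s))"

definition sheaf_sets ::
  "'a topology \<Rightarrow> ('a set \<Rightarrow> 'b set) \<Rightarrow> ('a set \<Rightarrow> 'a set \<Rightarrow> 'b \<Rightarrow> 'b) \<Rightarrow> bool" where
  "sheaf_sets T S res \<longleftrightarrow> presheaf_sets T S res
   \<and> (\<forall>U \<U>. openin T U \<and> (\<forall>V\<in>\<U>. openin T V) \<and> \<Union>\<U> = U \<longrightarrow>
        (\<forall>s\<in>S U. \<forall>t\<in>S U. (\<forall>V\<in>\<U>. res V U s = res V U t) \<longrightarrow> s = t))
   \<and> (\<forall>U \<U> f. openin T U \<and> (\<forall>V\<in>\<U>. openin T V) \<and> \<Union>\<U> = U
        \<and> (\<forall>V\<in>\<U>. f V \<in> S V)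
        \<and> (\<forall>V1\<in>\<U>. \<forall>V2\<in>\<U>. res (V1 \<inter> V2) V1 (f V1) = res (V1 \<inter> V2) V2 (f V2)) \<longrightarrow>
        (\<exists>s\<in>S U. \<forall>V\<in>\<U>. res V U s = f V))"

definition pseudometric_on :: "'b set \<Rightarrow> ('b \<Rightarrow> 'b \<Rightarrow> real) \<Rightarrow> bool" where
  "pseudometric_on A d \<longleftrightarrow>
     (\<forall>x\<in>A. d x x = 0) \<and> (\<forall>x\<in>A. \<forall>y\<in>A. d x y = d y x)
   \<and> (\<forall>x\<in>A. \<forall>y\<in>A. \<forall>z\<in>A. d x z \<le> d x y + d y z)"

definition sheaf_pseudometric ::
  "'a topology \<Rightarrow> ('a set \<Rightarrow> 'b set) \<Rightarrow> ('a set \<Rightarrow> 'a set \<Rightarrow> 'b \<Rightarrow> 'b)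
     \<Rightarrow> ('a set \<Rightarrow> 'b \<Rightarrow> 'b \<Rightarrow> real) \<Rightarrow> bool" where
  "sheaf_pseudometric T S res d \<longleftrightarrow> sheaf_sets T S res
   \<and> (\<forall>W. openin T W \<longrightarrow> pseudometric_on (S W) (d W))
   \<and> (\<forall>W1 W2. openin T W1 \<and> openin T W2 \<and> W1 \<subseteq> W2 \<longrightarrow>
        (\<forall>x\<in>S W2. \<forall>e>0. \<exists>\<delta>>0. \<forall>y\<in>S W2. d W2 x y < \<delta> \<longrightarrow> d W1 (res W1 W2 x) (res W1 W2 y) < e))"

definition assignment :: "'a topology \<Rightarrow> ('a set \<Rightarrow> 'b set) \<Rightarrow> ('a set \<Rightarrow> 'b) \<Rightarrow> bool" where
  "assignment T S b \<longleftrightarrow> (\<forall>W. openin T W \<longrightarrow> b W \<in> S W)"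

text \<open>Consistency radius, valued in the extended reals (the supremum may be infinite).\<close>
definition consistency_radius ::
  "'a topology \<Rightarrow> ('a set \<Rightarrow> 'a set \<Rightarrow> 'b \<Rightarrow> 'b) \<Rightarrow> ('a set \<Rightarrow> 'b \<Rightarrow> 'b \<Rightarrow> real)
     \<Rightarrow> ('a set \<Rightarrow> 'b) \<Rightarrow> ereal" where
  "consistency_radius T res d b =
     (SUP p \<in> {(W1, W2). openin T W1 \<and> openin T W2 \<and> W1 \<subseteq> W2}.
        ereal (d (fst p) (res (fst p) (snd p) (b (snd p))) (b (fst p))))"

text \<open>Consistency radius of an assignment supported on a collection \<U> of open sets:
  infimum over all full assignments extending it (infimum of the empty set is \<infinity>).\<close>
definition consistency_radius_supp ::
  "'a topology \<Rightarrow> ('a set \<Rightarrow> 'b set) \<Rightarrow> ('a set \<Rightarrow> 'a set \<Rightarrow> 'b \<Rightarrow> 'b) \<Rightarrow> ('a set \<Rightarrow> 'b \<Rightarrow> 'b \<Rightarrow> real)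
     \<Rightarrow> ('a set \<Rightarrow> 'b) \<Rightarrow> 'a set set \<Rightarrow> ereal" where
  "consistency_radius_supp T S res d a \<U> =
     (INF b \<in> {b. assignment T S b \<and> (\<forall>W\<in>\<U>. b W = a W)}. consistency_radius T res d b)"

definition local_consistency_radius ::
  "'a topology \<Rightarrow> ('a set \<Rightarrow> 'a set \<Rightarrow> 'b \<Rightarrow> 'b) \<Rightarrow> ('a set \<Rightarrow> 'b \<Rightarrow> 'b \<Rightarrow> real)
     \<Rightarrow> ('a set \<Rightarrow> 'b) \<Rightarrow> 'a set \<Rightarrow> ereal" where
  "local_consistency_radius T res d a U =
     (SUP p \<in> {(W1, W2). openin T W1 \<and> openin T W2 \<and> W1 \<subseteq> W2 \<and> W2 \<subseteq> U}.
        ereal (d (fst p) (res (fst p) (snd p) (a (snd p))) (a (fst p))))"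

end

theory Submission
  imports Defs
begin

text \<open>Every full assignment b extending a on the open subsets of U agrees with a on all pairs
  W1 \<subseteq> W2 \<subseteq> U, so the local consistency radius of a on U is that of b, which is bounded by the
  global consistency radius of b. Taking the infimum over b gives the claim.\<close>

lemma local_consistency_radius_cong:
  assumes "\<And>W. openin T W \<Longrightarrow> W \<subseteq> U \<Longrightarrow> b W = a W"
  shows "local_consistency_radius T res d b U = local_consistency_radius T res d a U"
  unfolding local_consistency_radius_def
  by (rule SUP_cong) (auto simp: assms)

lemma local_consistency_radius_le_consistency_radius:
  "local_consistency_radius T res d a U \<le> consistency_radius T res d a"
  unfolding local_consistency_radius_def consistency_radius_def
  by (rule SUP_subset_mono) auto

theorem proposition39:
  fixes T :: "'a topology" and S :: "'a set \<Rightarrow> 'b set"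
    and res :: "'a set \<Rightarrow> 'a set \<Rightarrow> 'b \<Rightarrow> 'b" and d :: "'a set \<Rightarrow> 'b \<Rightarrow> 'b \<Rightarrow> real"
    and a :: "'a set \<Rightarrow> 'b" and U :: "'a set"
  assumes "sheaf_pseudometric T S res d"
    and "assignment T S a"
    and "openin T U"
  shows "consistency_radius_supp T S res d a {V. openin T V \<and> V \<subseteq> U}
           \<ge> local_consistency_radius T res d a U"
  unfolding consistency_radius_supp_def
proof (rule INF_greatest)
  fix b
  assume "b \<in> {b. assignment T S b \<and> (\<forall>W\<in>{V. openin T V \<and> V \<subseteq> U}. b W = a W)}"
  then have "local_consistency_radius T res d a U = local_consistency_radius T res d b U"
    by (intro local_consistency_radius_cong [symmetric]) auto
  also have "\<dots> \<le> consistency_radius T res d b"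
    by (rule local_consistency_radius_le_consistency_radius)
  finally show "local_consistency_radius T res d a U \<le> consistency_radius T res d b" .
qed

end
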